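(* Let $0<\Omega\le1/2$ and $\alpha\in[0,1]$. Let $\mathcal{S}^n_\Omega$ be the set of all subsets of $\{1,\dots,n\}$ of size $\lfloor\Omega n\rfloor$, and let $N_n(\Omega,\alpha)$ be the cardinality of the smallest $\mathcal{S}\subseteq\mathcal{S}^n_\Omega$ such that for every $\mathbf{s}\in\mathcal{S}^n_\Omega$ there is $\mathbf{s}'\in\mathcal{S}$ with $d(\mathbf{s},\mathbf{s}')\le\alpha$. Then $$\lim_{n\to\infty}\tfrac1n\log N_n(\Omega,\alpha)=R(\Omega,\alpha).$$
   Context: $d(\mathbf{s},\mathbf{s}')=1-|\mathbf{s}\cap\mathbf{s}'|/|\mathbf{s}|$. Logarithms are natural. $H(p)=-p\log p-(1-p)\log(1-p)$ is the binary entropy. $R(\Omega,\alpha)=H(\Omega)-\Omega H(\alpha)-(1-\Omega)H\big(\tfrac{\Omega\alpha}{1-\Omega}\big)$ if $\alpha<1-\Omega$, and $R(\Omega,\alpha)=0$ if $\alpha\ge1-\Omega$. *)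

theory Defs
  imports Complex_Main
begin

definition bin_entropy :: "real \<Rightarrow> real" where
  "bin_entropy p = - p * ln p - (1 - p) * ln (1 - p)"

definition rate :: "real \<Rightarrow> real \<Rightarrow> real" where
  "rate \<Omega> \<alpha> = (if \<alpha> < 1 - \<Omega> then
      bin_entropy \<Omega> - \<Omega> * bin_entropy \<alpha> - (1 - \<Omega>) * bin_entropy (\<Omega> * \<alpha> / (1 - \<Omega>))
    else 0)"

definition sdist :: "nat set \<Rightarrow> nat set \<Rightarrow> real" where
  "sdist s s' = 1 - real (card (s \<inter> s')) / real (card s)"

definition slices :: "nat \<Rightarrow> real \<Rightarrow> nat set set" where
  "slices n \<Omega> = {s. s \<subseteq> {1..n} \<and> card s = nat \<lfloor>\<Omega> * real n\<rfloor>}"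

definition covering_number :: "nat \<Rightarrow> real \<Rightarrow> real \<Rightarrow> nat" where
  "covering_number n \<Omega> \<alpha> = (LEAST k. \<exists>S. S \<subseteq> slices n \<Omega> \<and> card S = k \<and>
      (\<forall>s\<in>slices n \<Omega>. \<exists>s'\<in>S. sdist s s' \<le> \<alpha>))"

end

theory Submission
  imports Defs "HOL-Library.FuncSet" "HOL-Real_Asymp.Real_Asymp"
begin

(* Let k = \<lfloor>\<Omega>n\<rfloor>, N = (n choose k) the size of the slice and V the common size of all
   \<alpha>-balls in it.  The proof is the sphere-covering argument:
     - double counting gives N \<le> c V for every cover of size c, and counting
       m-tuples of centres gives a cover of size at most N/V (ln N + 1);
       hence ln c = ln N - ln V + O(ln n)  (section "Covering numbers of slices");
     - a ball splits into shells {s. |s \<inter> x| = j} of sizes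
       (k choose j)((n - k) choose (k - j)); for \<alpha> < 1 - \<Omega> these decrease beyond
       the minimal admissible overlap j\<^sub>0, so V is its innermost shell up to a
       factor k + 1;
     - the entropy bounds ln (a choose b) = a H(b/a) + O(ln a) then give
       (ln N - ln V)/n \<rightarrow> R(\<Omega>,\<alpha>) for \<alpha> < 1 - \<Omega>;
     - for \<alpha> \<ge> 1 - \<Omega> the rate 0 follows by monotonicity in \<alpha>, since
       R(\<Omega>,\<alpha>) \<rightarrow> 0 as \<alpha> increases to 1 - \<Omega>. *)


section \<open>Entropy bounds for binomial coefficients\<close>

lemma bin_entropy_0 [simp]: "bin_entropy 0 = 0"
  and bin_entropy_1 [simp]: "bin_entropy 1 = 0"
  by (simp_all add: bin_entropy_def)

lemma bin_entropy_sym: "bin_entropy (1 - p) = bin_entropy p"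
  unfolding bin_entropy_def by (simp add: algebra_simps)

definition binomial_weight :: "nat \<Rightarrow> real \<Rightarrow> nat \<Rightarrow> real" where
  "binomial_weight a p j = real (a choose j) * p ^ j * (1 - p) ^ (a - j)"

lemma binomial_weight_nonneg: "0 \<le> p \<Longrightarrow> p \<le> 1 \<Longrightarrow> 0 \<le> binomial_weight a p j"
  by (simp add: binomial_weight_def)

lemma binomial_weight_sum: "(\<Sum>j\<le>a. binomial_weight a p j) = 1"
  using binomial_ring[of p "1 - p" a] by (simp add: binomial_weight_def)

lemma Suc_times_binomial_row: "j < a \<Longrightarrow> Suc j * (a choose Suc j) = (a - j) * (a choose j)"
  using Suc_times_binomial[of j "a - 1"] binomial_absorb_comp[of a j] by simp

lemma binomial_weight_ratio:
  assumes "j < a"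
  shows "binomial_weight a p (Suc j) * (real j + 1) * (1 - p)
           = binomial_weight a p j * (real a - real j) * p"
proof -
  have c: "real (a choose Suc j) * (real j + 1) = real (a choose j) * (real a - real j)"
    using arg_cong[OF Suc_times_binomial_row[OF assms], of real] assms
    by (simp add: of_nat_diff algebra_simps)
  have "(1 - p) ^ (a - j) = (1 - p) * (1 - p) ^ (a - Suc j)"
    using assms by (simp flip: power_Suc add: Suc_diff_Suc)
  then have "binomial_weight a p j * (real a - real j) * p
      = (real (a choose j) * (real a - real j)) * p ^ Suc j * (1 - p) ^ (a - Suc j) * (1 - p)"
    unfolding binomial_weight_def power_Suc by (simp only: mult_ac)
  also have "\<dots> = binomial_weight a p (Suc j) * (real j + 1) * (1 - p)"
    unfolding binomial_weight_def c[symmetric] by (simp only: mult_ac)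
  finally show ?thesis ..
qed

text \<open>The binomial weights with mean \<open>b = a p\<close> increase up to \<open>b\<close> and decrease after it.\<close>
lemma binomial_weight_mode:
  assumes b: "0 < b" "b < a" and p: "p = real b / real a" and j: "j \<le> a"
  shows "binomial_weight a p j \<le> binomial_weight a p b"
proof -
  let ?w = "binomial_weight a p"
  have p01: "0 < p" "p < 1" using b by (auto simp: p field_simps)
  have pa: "real b = real a * p" using b by (simp add: p)
  have up: "?w n \<le> ?w (Suc n)" if "n < b" for n
  proof -
    have "(real n + 1) * (1 - p) \<le> (real a - real n) * p" using that pa p01 by (simp add: algebra_simps)
    then have "?w n * ((real n + 1) * (1 - p)) \<le> ?w n * ((real a - real n) * p)"
      using p01 by (intro mult_left_mono binomial_weight_nonneg) auto
    also have "\<dots> = ?w (Suc n) * (real n + 1) * (1 - p)"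
      using binomial_weight_ratio[of n a p] that b by simp
    finally show ?thesis using p01 by (simp add: mult.assoc)
  qed
  have down: "?w (Suc n) \<le> ?w n" if "b \<le> n" "n < a" for n
  proof -
    have "?w (Suc n) * (real n + 1) * (1 - p) = ?w n * ((real a - real n) * p)"
      using binomial_weight_ratio[OF that(2)] by simp
    also have "\<dots> \<le> ?w n * ((real n + 1) * (1 - p))"
      using that pa p01 by (intro mult_left_mono binomial_weight_nonneg) (auto simp: algebra_simps)
    finally show ?thesis using p01 by (simp add: mult.assoc)
  qed
  show ?thesis
  proof (cases "j \<le> b")
    case True
    then show ?thesis
    proof (induction b rule: dec_induct)
      case (step n)
      then show ?case using up[of n] order.trans by blast
    qed simp
  next
    case False
    then have "b \<le> j" by simp
    then show ?thesis using j
    proof (induction j rule: dec_induct)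
      case (step n)
      then show ?case using down[of n] by simp
    qed simp
  qed
qed

lemma ln_binomial_weight_mode:
  assumes "0 < b" "b < a"
  shows "ln (binomial_weight a (real b / real a) b)
           = ln (real (a choose b)) - real a * bin_entropy (real b / real a)"
proof -
  define p where "p = real b / real a"
  have p: "0 < p" "p < 1" using assms by (auto simp: p_def field_simps)
  have "ln (binomial_weight a p b) = ln (real (a choose b)) + real b * ln p + real (a - b) * ln (1 - p)"
    unfolding binomial_weight_def using p assms by (simp add: ln_mult ln_realpow)
  moreover have "real a * bin_entropy p = - real b * ln p - real (a - b) * ln (1 - p)"
    using assms by (simp add: bin_entropy_def p_def of_nat_diff field_simps)
  ultimately show ?thesis by (simp add: p_def)
qed

lemma ln_binomial_le_entropy:
  assumes "b \<le> a" "0 < a"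
  shows "ln (real (a choose b)) \<le> real a * bin_entropy (real b / real a)"
proof (cases "b = 0 \<or> b = a")
  case False
  then have b: "0 < b" "b < a" using assms by auto
  let ?w = "binomial_weight a (real b / real a)"
  have "?w b \<le> (\<Sum>j\<le>a. ?w j)"
    using b by (intro member_le_sum binomial_weight_nonneg) auto
  then have "?w b \<le> 1" by (simp add: binomial_weight_sum)
  moreover have "0 < ?w b" using b by (simp add: binomial_weight_def)
  ultimately have "ln (?w b) \<le> 0" by simp
  then show ?thesis using ln_binomial_weight_mode[OF b] by simp
qed (use assms in auto)

lemma ln_binomial_ge_entropy:
  assumes "b \<le> a" "0 < a"
  shows "real a * bin_entropy (real b / real a) - ln (real a + 1) \<le> ln (real (a choose b))"
proof (cases "b = 0 \<or> b = a")
  case False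
  then have b: "0 < b" "b < a" using assms by auto
  let ?w = "binomial_weight a (real b / real a)"
  have "1 = (\<Sum>j\<le>a. ?w j)" by (simp add: binomial_weight_sum)
  also have "\<dots> \<le> (\<Sum>j\<le>a. ?w b)" by (intro sum_mono binomial_weight_mode[OF b]) auto
  finally have "1 / (real a + 1) \<le> ?w b" by (simp add: field_simps)
  then have "ln (1 / (real a + 1)) \<le> ln (?w b)" by (simp add: ln_mono)
  then show ?thesis using ln_binomial_weight_mode[OF b] by (simp add: ln_div)
qed (use assms in auto)


section \<open>Exponential growth rate of binomial coefficients\<close>

text \<open>\<open>H\<close> is continuous on \<open>[0,1]\<close>, including the endpoints where \<open>x ln x \<rightarrow> 0\<close>.\<close>
lemma continuous_on_bin_entropy: "continuous_on {0..1} bin_entropy"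
proof -
  have xlnx: "continuous_on {0..1} (\<lambda>x::real. x * ln x)"
  proof (subst continuous_on_eq_continuous_within, intro ballI)
    fix x :: real assume x: "x \<in> {0..1}"
    show "continuous (at x within {0..1}) (\<lambda>x. x * ln x)"
    proof (cases "x = 0")
      case True
      have "((\<lambda>x::real. x * ln x) \<longlongrightarrow> 0) (at_right 0)" by real_asymp
      then show ?thesis
        unfolding True continuous_within at_within_Icc_at_right[OF zero_less_one] by simp
    next
      case False
      then have "isCont (\<lambda>x. x * ln x) x" using x by (intro continuous_intros) auto
      then show ?thesis using continuous_at_imp_continuous_at_within by blast
    qed
  qed
  have "continuous_on {0..1} (\<lambda>x::real. (1 - x) * ln (1 - x))"
    by (rule continuous_on_compose2[OF xlnx]) (auto intro: continuous_intros)
  with xlnx have "continuous_on {0..1} (\<lambda>x::real. - (x * ln x) - (1 - x) * ln (1 - x))"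
    by (intro continuous_on_diff continuous_on_minus)
  then show ?thesis by (simp add: bin_entropy_def [abs_def])
qed

lemma tendsto_bin_entropy:
  assumes "(f \<longlongrightarrow> c) F" "c \<in> {0..1}" "eventually (\<lambda>x. f x \<in> {0..1}) F"
  shows "((\<lambda>x. bin_entropy (f x)) \<longlongrightarrow> bin_entropy c) F"
  using continuous_on_tendsto_compose[OF continuous_on_bin_entropy assms] .

lemma tendsto_over_n_of_bounded_dev:
  fixes x :: "nat \<Rightarrow> real"
  assumes "eventually (\<lambda>n. \<bar>x n - c * real n\<bar> \<le> C) sequentially"
  shows "(\<lambda>n. x n / real n) \<longlonglongrightarrow> c"
proof -
  have lower: "(\<lambda>n. c - C / real n) \<longlonglongrightarrow> c" and upper: "(\<lambda>n. c + C / real n) \<longlonglongrightarrow> c"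
    by real_asymp+
  have bounds: "eventually (\<lambda>n. c - C / real n \<le> x n / real n \<and> x n / real n \<le> c + C / real n) sequentially"
    using assms eventually_gt_at_top[of "0::nat"]
  proof eventually_elim
    case (elim n)
    then have "(c * real n - C) / real n \<le> x n / real n" "x n / real n \<le> (c * real n + C) / real n"
      by (auto intro: divide_right_mono)
    then show ?case using elim by (simp add: diff_divide_distrib add_divide_distrib)
  qed
  show ?thesis
    by (rule tendsto_sandwich[OF eventually_mono[OF bounds] eventually_mono[OF bounds] lower upper]) auto
qed

text \<open>Polynomial factors are invisible at exponential scale.\<close>
lemma ln_Suc_over_n: "(\<lambda>n. ln (real n + 1) / real n) \<longlonglongrightarrow> 0"
  by real_asymp

lemma ln_binomial_rate:
  fixes a b :: "nat \<Rightarrow> nat"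
  assumes a: "(\<lambda>n. real (a n) / real n) \<longlonglongrightarrow> A" and b: "(\<lambda>n. real (b n) / real n) \<longlonglongrightarrow> B"
    and A: "0 < A" and B: "0 \<le> B" "B \<le> A"
    and ev: "eventually (\<lambda>n. b n \<le> a n \<and> a n \<le> n) sequentially"
  shows "(\<lambda>n. ln (real (a n choose b n)) / real n) \<longlonglongrightarrow> A * bin_entropy (B / A)"
proof -
  define u where "u n = real (a n) * bin_entropy (real (b n) / real (a n)) / real n" for n
  have ratio: "(\<lambda>n. (real (b n) / real n) / (real (a n) / real n)) \<longlonglongrightarrow> B / A"
    using tendsto_divide[OF b a] A by simp
  have "eventually (\<lambda>n. (real (b n) / real n) / (real (a n) / real n) \<in> {0..1}) sequentially"
    using ev eventually_gt_at_top[of "0::nat"]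
    by eventually_elim (cases "a n = 0", auto simp: divide_le_eq_1)
  moreover have "B / A \<in> {0..1}" using A B by (simp add: divide_le_eq_1)
  ultimately have "(\<lambda>n. real (a n) / real n * bin_entropy ((real (b n) / real n) / (real (a n) / real n)))
        \<longlonglongrightarrow> A * bin_entropy (B / A)"
    by (intro tendsto_mult a tendsto_bin_entropy[OF ratio])
  moreover have "eventually (\<lambda>n. real (a n) / real n * bin_entropy ((real (b n) / real n) / (real (a n) / real n)) = u n) sequentially"
    using eventually_gt_at_top[of "0::nat"] by eventually_elim (simp add: u_def)
  ultimately have u: "u \<longlonglongrightarrow> A * bin_entropy (B / A)" by (simp add: tendsto_cong)
  have u': "(\<lambda>n. u n - ln (real n + 1) / real n) \<longlonglongrightarrow> A * bin_entropy (B / A)"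
    using tendsto_diff[OF u ln_Suc_over_n] by simp
  have "eventually (\<lambda>n. A / 2 < real (a n) / real n) sequentially"
    using order_tendstoD(1)[OF a, of "A / 2"] A by simp
  then have bounds: "eventually (\<lambda>n. u n - ln (real n + 1) / real n \<le> ln (real (a n choose b n)) / real n
              \<and> ln (real (a n choose b n)) / real n \<le> u n) sequentially"
    using ev eventually_gt_at_top[of "0::nat"]
  proof eventually_elim
    case (elim n)
    then have ab: "b n \<le> a n" "a n \<le> n" by auto
    have "0 < real (a n) / real n" using elim A by linarith
    then have a0: "0 < a n" by (simp add: zero_less_divide_iff)
    have "ln (real (a n) + 1) \<le> ln (real n + 1)" using ab by simp
    then have "real (a n) * bin_entropy (real (b n) / real (a n)) - ln (real n + 1)
        \<le> ln (real (a n choose b n))"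
      using ln_binomial_ge_entropy[OF ab(1) a0] by linarith
    then show ?case
      using ln_binomial_le_entropy[OF ab(1) a0] elim unfolding u_def
      by (simp add: divide_right_mono flip: diff_divide_distrib)
  qed
  show ?thesis
    by (rule tendsto_sandwich[OF eventually_mono[OF bounds] eventually_mono[OF bounds] u' u]) auto
qed


section \<open>Balls in a slice and their shell decomposition\<close>

definition slice_size :: "nat \<Rightarrow> real \<Rightarrow> nat" where
  "slice_size n \<Omega> = nat \<lfloor>\<Omega> * real n\<rfloor>"

text \<open>The smallest overlap \<open>|s \<inter> x|\<close> that keeps two \<open>k\<close>-sets within distance \<open>\<alpha>\<close>.\<close>
definition min_overlap :: "nat \<Rightarrow> real \<Rightarrow> nat" where
  "min_overlap k \<alpha> = nat \<lceil>(1 - \<alpha>) * real k\<rceil>"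

text \<open>Size of the shell of \<open>k\<close>-subsets of \<open>{1..n}\<close> meeting a fixed \<open>k\<close>-subset in \<open>j\<close> points.\<close>
definition shell_size :: "nat \<Rightarrow> nat \<Rightarrow> nat \<Rightarrow> nat" where
  "shell_size n k j = (k choose j) * ((n - k) choose (k - j))"

definition ball_size :: "nat \<Rightarrow> nat \<Rightarrow> real \<Rightarrow> nat" where
  "ball_size n k \<alpha> = (\<Sum>j\<in>{min_overlap k \<alpha>..k}. shell_size n k j)"

lemma finite_slices: "finite (slices n \<Omega>)"
  unfolding slices_def by (rule finite_subset[of _ "Pow {1..n}"]) auto

lemma card_slices: "card (slices n \<Omega>) = n choose slice_size n \<Omega>"
  unfolding slices_def slice_size_def using n_subsets[of "{1..n}"] by simp

lemma slice_size_le: "\<Omega> \<le> 1 \<Longrightarrow> slice_size n \<Omega> \<le> n"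
proof -
  assume "\<Omega> \<le> 1"
  then have "\<Omega> * real n \<le> 1 * real n" by (intro mult_right_mono) auto
  then show ?thesis unfolding slice_size_def by linarith
qed

lemma min_overlap_le: "0 \<le> \<alpha> \<Longrightarrow> min_overlap k \<alpha> \<le> k"
  unfolding min_overlap_def by (simp add: ceiling_le_iff algebra_simps)

lemma sdist_le_iff_overlap:
  assumes "finite s" "card s = k" "0 < k"
  shows "sdist s x \<le> \<alpha> \<longleftrightarrow> min_overlap k \<alpha> \<le> card (s \<inter> x)"
proof -
  have "sdist s x \<le> \<alpha> \<longleftrightarrow> (1 - \<alpha>) * real k \<le> real (card (s \<inter> x))"
    using assms unfolding sdist_def by (simp add: field_simps)
  also have "\<dots> \<longleftrightarrow> min_overlap k \<alpha> \<le> card (s \<inter> x)"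
    unfolding min_overlap_def by (simp add: ceiling_le_iff nat_le_iff)
  finally show ?thesis .
qed

text \<open>A set with overlap \<open>j\<close> with \<open>x\<close> splits into a \<open>j\<close>-subset of \<open>x\<close> and a
  \<open>(k - j)\<close>-subset of the complement.\<close>
lemma card_shell:
  assumes x: "x \<subseteq> {1..n}" "card x = k" and j: "j \<le> k"
  shows "card {s. s \<subseteq> {1..n} \<and> card s = k \<and> card (s \<inter> x) = j} = shell_size n k j"
proof -
  define P where "P = {A. A \<subseteq> x \<and> card A = j}"
  define Q where "Q = {B. B \<subseteq> {1..n} - x \<and> card B = k - j}"
  have fx: "finite x" using x finite_subset by blast
  have "card ({1..n} - x) = n - k" using x fx by (simp add: card_Diff_subset)
  then have cPQ: "card P = k choose j" "card Q = (n - k) choose (k - j)"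
    unfolding P_def Q_def using n_subsets[OF fx] n_subsets[of "{1..n} - x"] x by simp_all
  have inj: "inj_on (\<lambda>(A, B). A \<union> B) (P \<times> Q)"
  proof (rule inj_onI)
    fix u v assume "u \<in> P \<times> Q" "v \<in> P \<times> Q" "(\<lambda>(A, B). A \<union> B) u = (\<lambda>(A, B). A \<union> B) v"
    moreover obtain A B A' B' where uv: "u = (A, B)" "v = (A', B')" by (cases u, cases v) auto
    ultimately have "A = (A \<union> B) \<inter> x" "A' = (A' \<union> B') \<inter> x" "B = (A \<union> B) - x" "B' = (A' \<union> B') - x"
      and eq: "A \<union> B = A' \<union> B'"
      unfolding P_def Q_def by auto
    then show "u = v" unfolding uv by (metis (no_types))
  qed
  have image: "(\<lambda>(A, B). A \<union> B) ` (P \<times> Q) = {s. s \<subseteq> {1..n} \<and> card s = k \<and> card (s \<inter> x) = j}"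
  proof (intro equalityI subsetI)
    fix s assume "s \<in> (\<lambda>(A, B). A \<union> B) ` (P \<times> Q)"
    then obtain A B where AB: "A \<in> P" "B \<in> Q" and s: "s = A \<union> B" by auto
    have "finite A" "finite B" using AB fx unfolding P_def Q_def by (auto intro: finite_subset)
    moreover have "A \<inter> B = {}" "(A \<union> B) \<inter> x = A" using AB unfolding P_def Q_def by auto
    ultimately show "s \<in> {s. s \<subseteq> {1..n} \<and> card s = k \<and> card (s \<inter> x) = j}"
      using AB x j card_Un_disjoint[of A B] unfolding s P_def Q_def by auto
  next
    fix s assume "s \<in> {s. s \<subseteq> {1..n} \<and> card s = k \<and> card (s \<inter> x) = j}"
    then have s: "s \<subseteq> {1..n}" "card s = k" "card (s \<inter> x) = j" by auto
    then have "card (s - x) = k - j"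
      using card_Diff_subset_Int[of s x] finite_subset[OF s(1)] by simp
    then have "(s \<inter> x, s - x) \<in> P \<times> Q" using s unfolding P_def Q_def by auto
    then show "s \<in> (\<lambda>(A, B). A \<union> B) ` (P \<times> Q)" by (intro image_eqI[of _ _ "(s \<inter> x, s - x)"]) auto
  qed
  have "card {s. s \<subseteq> {1..n} \<and> card s = k \<and> card (s \<inter> x) = j} = card (P \<times> Q)"
    unfolding image[symmetric] by (rule card_image[OF inj])
  then show ?thesis using cPQ by (simp add: shell_size_def card_cartesian_product)
qed

text \<open>All balls in the slice have the same size: the ball is the union of the shells
  with overlap at least \<open>min_overlap k \<alpha>\<close>.\<close>
lemma card_slice_ball:
  assumes x: "x \<in> slices n \<Omega>" and k: "0 < slice_size n \<Omega>"
  shows "card {s \<in> slices n \<Omega>. sdist s x \<le> \<alpha>} = ball_size n (slice_size n \<Omega>) \<alpha>"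
proof -
  let ?k = "slice_size n \<Omega>"
  define E where "E j = {s. s \<subseteq> {1..n} \<and> card s = ?k \<and> card (s \<inter> x) = j}" for j
  have xs: "x \<subseteq> {1..n}" "card x = ?k" using x unfolding slices_def slice_size_def by auto
  have "{s \<in> slices n \<Omega>. sdist s x \<le> \<alpha>} = (\<Union>j\<in>{min_overlap ?k \<alpha>..?k}. E j)"
  proof (intro set_eqI iffI)
    fix s assume "s \<in> {s \<in> slices n \<Omega>. sdist s x \<le> \<alpha>}"
    then have s: "s \<subseteq> {1..n}" "card s = ?k" "sdist s x \<le> \<alpha>"
      unfolding slices_def slice_size_def by auto
    moreover have fs: "finite s" using s finite_subset by blast
    moreover have "card (s \<inter> x) \<le> ?k" using card_mono[OF fs, of "s \<inter> x"] s by auto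
    ultimately show "s \<in> (\<Union>j\<in>{min_overlap ?k \<alpha>..?k}. E j)"
      using sdist_le_iff_overlap[OF fs s(2) k] unfolding E_def by auto
  next
    fix s assume "s \<in> (\<Union>j\<in>{min_overlap ?k \<alpha>..?k}. E j)"
    then obtain j where j: "j \<in> {min_overlap ?k \<alpha>..?k}" "s \<subseteq> {1..n}" "card s = ?k" "card (s \<inter> x) = j"
      unfolding E_def by auto
    moreover have "finite s" using j finite_subset by blast
    ultimately show "s \<in> {s \<in> slices n \<Omega>. sdist s x \<le> \<alpha>}"
      using sdist_le_iff_overlap[of s ?k x \<alpha>] k unfolding slices_def slice_size_def by auto
  qed
  also have "card \<dots> = (\<Sum>j\<in>{min_overlap ?k \<alpha>..?k}. card (E j))"
    by (rule card_UN_disjoint) (auto simp: E_def intro: finite_subset[of _ "Pow {1..n}"])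
  also have "\<dots> = ball_size n ?k \<alpha>"
    unfolding ball_size_def E_def by (intro sum.cong refl card_shell[OF xs]) auto
  finally show ?thesis .
qed

lemma shell_size_ratio:
  assumes "j < k"
  shows "shell_size n k (Suc j) * (Suc j * ((n - k) - (k - j - 1)))
           = shell_size n k j * ((k - j) * (k - j))"
proof -
  define r where "r = k - j"
  define M where "M = n - k"
  have r: "0 < r" "k - Suc j = r - 1" using assms by (simp_all add: r_def)
  have outside: "(M choose (r - 1)) * (M - (r - 1)) = (M choose r) * r"
  proof (cases "r - 1 < M")
    case True
    then show ?thesis using Suc_times_binomial_row[OF True] r(1) by (simp add: mult.commute)
  qed (use r(1) in auto)
  have "shell_size n k (Suc j) * (Suc j * (M - (r - 1)))
      = (Suc j * (k choose Suc j)) * ((M choose (r - 1)) * (M - (r - 1)))"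
    unfolding shell_size_def M_def r(2) by (simp only: mult_ac)
  also have "\<dots> = ((k choose j) * r) * ((M choose r) * r)"
    using Suc_times_binomial_row[OF assms] outside by (simp add: r_def)
  finally show ?thesis unfolding shell_size_def M_def r_def by (simp add: mult_ac Suc_diff_Suc)
qed

text \<open>Elementary inequality behind the decrease of shell sizes: if \<open>r (k + M) \<le> k M\<close>
  then \<open>r\<^sup>2 \<le> (k - r + 1)(M - r + 1)\<close>.\<close>
lemma square_le_shifted_product:
  fixes r k M :: real
  assumes "r \<le> k" "r \<le> M" "r * (k + M) \<le> k * M"
  shows "r * r \<le> (k - r + 1) * (M - r + 1)"
proof -
  have "0 \<le> (k - r) * (M - r)" using assms by simp
  moreover have "(k - r + 1) * (M - r + 1) = r * r + (k * M - r * (k + M)) + (k - r) + (M - r) + 1"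
    by (simp add: algebra_simps)
  ultimately show ?thesis using assms by linarith
qed

lemma shell_size_decreasing:
  assumes kn: "real k \<le> (1 - \<alpha>) * real n" and \<alpha>: "0 \<le> \<alpha>"
    and j: "min_overlap k \<alpha> \<le> j" "j < k"
  shows "shell_size n k (Suc j) \<le> shell_size n k j"
proof -
  define r where "r = k - j"
  define M where "M = n - k"
  have "(1 - \<alpha>) * real n \<le> real n" using \<alpha> by (simp add: algebra_simps)
  then have "k \<le> n" using kn by linarith
  then have eM: "real M = real n - real k" by (simp add: M_def)
  have er: "real r = real k - real j" using j by (simp add: r_def)
  have "(1 - \<alpha>) * real k \<le> real j" using j(1) unfolding min_overlap_def by linarith
  then have r_le: "real r \<le> \<alpha> * real k" using er by (simp add: algebra_simps)
  have \<alpha>n: "\<alpha> * real n \<le> real M" using kn eM by (simp add: algebra_simps)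
  have "real r * (real k + real M) \<le> \<alpha> * real k * real n"
    using r_le eM by (simp add: mult_right_mono)
  also have "\<dots> = real k * (\<alpha> * real n)" by simp
  also have "\<dots> \<le> real k * real M" using \<alpha>n by (intro mult_left_mono) auto
  finally have rkM: "real r * (real k + real M) \<le> real k * real M" .
  have rM: "real r \<le> real M"
  proof -
    have "\<alpha> * real k \<le> \<alpha> * real n" using \<open>k \<le> n\<close> \<alpha> by (simp add: mult_left_mono)
    then show ?thesis using r_le \<alpha>n by linarith
  qed
  have "real r * real r \<le> (real k - real r + 1) * (real M - real r + 1)"
    using square_le_shifted_product[OF _ rM rkM] er by simp
  also have "\<dots> = real (Suc j * (M - (r - 1)))"
  proof -
    have "real (Suc j) = real k - real r + 1" "real (M - (r - 1)) = real M - real r + 1"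
      using rM j by (simp_all add: r_def of_nat_diff)
    then show ?thesis by (simp only: of_nat_mult)
  qed
  finally have "r * r \<le> Suc j * (M - (k - j - 1))" unfolding r_def of_nat_mult[symmetric] of_nat_le_iff .
  then have "shell_size n k (Suc j) * (r * r) \<le> shell_size n k (Suc j) * (Suc j * (M - (k - j - 1)))"
    by simp
  also have "\<dots> = shell_size n k j * (r * r)" using shell_size_ratio[OF j(2)] by (simp add: M_def r_def)
  finally show ?thesis using j by (simp add: r_def)
qed

lemma ball_size_bounds:
  assumes kn: "real k \<le> (1 - \<alpha>) * real n" and \<alpha>: "0 \<le> \<alpha>"
  shows "shell_size n k (min_overlap k \<alpha>) \<le> ball_size n k \<alpha>"
    and "ball_size n k \<alpha> \<le> (k + 1) * shell_size n k (min_overlap k \<alpha>)"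
proof -
  let ?j\<^sub>0 = "min_overlap k \<alpha>"
  show "shell_size n k ?j\<^sub>0 \<le> ball_size n k \<alpha>"
    unfolding ball_size_def by (rule member_le_sum) (use min_overlap_le[OF \<alpha>] in auto)
  have "shell_size n k j \<le> shell_size n k ?j\<^sub>0" if "?j\<^sub>0 \<le> j" "j \<le> k" for j
    using that
  proof (induction j rule: dec_induct)
    case (step i)
    then show ?case using shell_size_decreasing[OF kn \<alpha>, of i] by simp
  qed simp
  then have "ball_size n k \<alpha> \<le> (\<Sum>j\<in>{?j\<^sub>0..k}. shell_size n k ?j\<^sub>0)"
    unfolding ball_size_def by (intro sum_mono) auto
  also have "\<dots> = (Suc k - ?j\<^sub>0) * shell_size n k ?j\<^sub>0" by simp
  also have "\<dots> \<le> (k + 1) * shell_size n k ?j\<^sub>0" by (intro mult_le_mono1) simp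
  finally show "ball_size n k \<alpha> \<le> (k + 1) * shell_size n k ?j\<^sub>0" .
qed

lemma ball_size_pos: "0 \<le> \<alpha> \<Longrightarrow> 0 < ball_size n k \<alpha>"
  unfolding ball_size_def shell_size_def
  by (rule order.strict_trans2[OF _ member_le_sum[of k]]) (auto simp: min_overlap_le)

text \<open>By Vandermonde's identity, a ball is no larger than the whole slice.\<close>
lemma ball_size_le_binomial: "k \<le> n \<Longrightarrow> ball_size n k \<alpha> \<le> n choose k"
proof -
  assume "k \<le> n"
  have "ball_size n k \<alpha> \<le> (\<Sum>j\<le>k. (k choose j) * ((n - k) choose (k - j)))"
    unfolding ball_size_def shell_size_def by (rule sum_mono2) auto
  also have "\<dots> = n choose k" using vandermonde[of k "n - k" k] \<open>k \<le> n\<close> by simp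
  finally show ?thesis .
qed

lemma ln_ball_size_bounds:
  fixes n k :: nat and \<alpha> :: real
  defines "T \<equiv> shell_size n k (min_overlap k \<alpha>)"
  assumes kn: "real k \<le> (1 - \<alpha>) * real n" and \<alpha>: "0 \<le> \<alpha>" and T: "0 < T"
  shows "ln (real T) \<le> ln (real (ball_size n k \<alpha>))"
    and "ln (real (ball_size n k \<alpha>)) \<le> ln (real T) + ln (real n + 1)"
proof -
  have T_V: "T \<le> ball_size n k \<alpha>" "ball_size n k \<alpha> \<le> (k + 1) * T"
    unfolding T_def using ball_size_bounds[OF kn \<alpha>] by auto
  then show "ln (real T) \<le> ln (real (ball_size n k \<alpha>))" using T by simp
  have "(1 - \<alpha>) * real n \<le> real n" using \<alpha> by (simp add: algebra_simps)
  then have "k \<le> n" using kn by linarith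
  have "real (ball_size n k \<alpha>) \<le> real ((k + 1) * T)"
    using T_V(2) by (simp only: of_nat_le_iff)
  also have "\<dots> = (real k + 1) * real T" by (simp add: algebra_simps)
  also have "\<dots> \<le> (real n + 1) * real T"
    using \<open>k \<le> n\<close> by (intro mult_right_mono) auto
  finally have "ln (real (ball_size n k \<alpha>)) \<le> ln ((real n + 1) * real T)"
    using ball_size_pos[OF \<alpha>] by (intro ln_mono) auto
  also have "\<dots> = ln (real T) + ln (real n + 1)" using T by (simp add: ln_mult_pos)
  finally show "ln (real (ball_size n k \<alpha>)) \<le> ln (real T) + ln (real n + 1)" .
qed

lemma ball_size_mono: "\<alpha>' \<le> \<alpha> \<Longrightarrow> ball_size n k \<alpha>' \<le> ball_size n k \<alpha>"
proof -
  assume "\<alpha>' \<le> \<alpha>"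
  then have "min_overlap k \<alpha> \<le> min_overlap k \<alpha>'"
    unfolding min_overlap_def by (intro nat_mono ceiling_mono mult_right_mono) auto
  then show ?thesis unfolding ball_size_def by (intro sum_mono2) auto
qed


section \<open>Covers for regular symmetric relations\<close>

text \<open>Sphere-covering bound: each centre covers only \<open>V\<close> elements.\<close>
lemma regular_cover_lower:
  fixes near :: "'a \<Rightarrow> 'a \<Rightarrow> bool"
  assumes fX: "finite X" and deg: "\<forall>s\<in>X. card {c\<in>X. near s c} = V"
    and sym: "\<And>s c. s \<in> X \<Longrightarrow> c \<in> X \<Longrightarrow> near s c \<longleftrightarrow> near c s"
    and S: "S \<subseteq> X" "\<And>s. s \<in> X \<Longrightarrow> \<exists>c\<in>S. near s c"
  shows "card X \<le> card S * V"
proof -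
  have fS: "finite S" using S fX finite_subset by blast
  have "X \<subseteq> (\<Union>c\<in>S. {s\<in>X. near s c})" using S by blast
  then have "card X \<le> card (\<Union>c\<in>S. {s\<in>X. near s c})" by (intro card_mono) (use fS fX in auto)
  also have "\<dots> \<le> (\<Sum>c\<in>S. card {s\<in>X. near s c})" by (rule card_UN_le[OF fS])
  also have "\<dots> = (\<Sum>c\<in>S. V)"
  proof (rule sum.cong)
    fix c assume c: "c \<in> S"
    then have "{s\<in>X. near s c} = {s\<in>X. near c s}" using sym S by auto
    then show "card {s\<in>X. near s c} = V" using deg c S by auto
  qed simp
  finally show ?thesis by simp
qed

text \<open>Counting argument: if the \<open>|X|\<close> sets of \<open>m\<close>-tuples missing a given element's
  neighbourhood cannot exhaust all \<open>|X|\<^sup>m\<close> tuples, some \<open>m\<close>-tuple is a cover.\<close>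
lemma regular_cover_upper:
  fixes near :: "'a \<Rightarrow> 'a \<Rightarrow> bool"
  assumes fX: "finite X" and deg: "\<forall>s\<in>X. card {c\<in>X. near s c} = V"
    and m: "card X * (card X - V) ^ m < card X ^ m"
  shows "\<exists>S. S \<subseteq> X \<and> card S \<le> m \<and> (\<forall>s\<in>X. \<exists>c\<in>S. near s c)"
proof -
  define T where "T = PiE {..<m} (\<lambda>_. X)"
  define Miss where "Miss s = PiE {..<m} (\<lambda>_. {c\<in>X. \<not> near s c})" for s
  have card_Miss: "card (Miss s) = (card X - V) ^ m" if "s \<in> X" for s
  proof -
    have "{c\<in>X. \<not> near s c} = X - {c\<in>X. near s c}" by auto
    then have "card {c\<in>X. \<not> near s c} = card X - V" using deg that fX by (simp add: card_Diff_subset)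
    then show ?thesis unfolding Miss_def by (simp add: card_PiE)
  qed
  have "card (\<Union>s\<in>X. Miss s) \<le> (\<Sum>s\<in>X. card (Miss s))" by (rule card_UN_le[OF fX])
  also have "\<dots> = card X * (card X - V) ^ m" using card_Miss by simp
  finally have "card (\<Union>s\<in>X. Miss s) < card T" using m unfolding T_def by (simp add: card_PiE)
  moreover have "finite (\<Union>s\<in>X. Miss s)" unfolding Miss_def using fX by (intro finite_UN_I finite_PiE) auto
  ultimately have "\<not> T \<subseteq> (\<Union>s\<in>X. Miss s)" using card_mono[of "\<Union>s\<in>X. Miss s" T] by linarith
  then obtain f where f: "f \<in> T" "\<And>s. s \<in> X \<Longrightarrow> f \<notin> Miss s" by blast
  have "\<exists>c\<in>f ` {..<m}. near s c" if "s \<in> X" for s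
    using f(1) f(2)[OF that] unfolding T_def Miss_def PiE_iff by auto
  moreover have "f ` {..<m} \<subseteq> X" using f(1) unfolding T_def by auto
  moreover have "card (f ` {..<m}) \<le> m" using card_image_le[of "{..<m}" f] by simp
  ultimately show ?thesis by blast
qed

text \<open>With \<open>m > N ln N / V\<close> tuples the counting condition holds, since \<open>(1 - V/N)\<^sup>m < 1/N\<close>.\<close>
lemma random_cover_condition:
  fixes N V m :: nat
  assumes V: "1 \<le> V" "V \<le> N" and m: "real N * ln (real N) / real V < real m"
  shows "N * (N - V) ^ m < N ^ m"
proof -
  define q where "q = real V / real N"
  have q: "0 < q" "q \<le> 1" and N: "0 < real N" using V by (auto simp: q_def)
  have "real (N - V) = real N * (1 - q)" using V N by (simp add: q_def of_nat_diff field_simps)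
  then have "real ((N - V) ^ m) = real N ^ m * (1 - q) ^ m" by (simp add: power_mult_distrib)
  also have "\<dots> \<le> real N ^ m * exp (- q) ^ m"
    using q exp_ge_add_one_self[of "- q"] by (intro mult_left_mono power_mono) auto
  also have "\<dots> = real N ^ m * exp (- (q * real m))"
    by (simp add: exp_of_nat_mult[symmetric] mult.commute)
  finally have miss: "real ((N - V) ^ m) \<le> real N ^ m * exp (- (q * real m))" .
  have "ln (real N) < q * real m" using m N V by (simp add: q_def field_simps)
  then have "exp (- (q * real m)) < exp (- ln (real N))" by simp
  then have small: "real N * exp (- (q * real m)) < 1" using N by (simp add: exp_minus field_simps)
  have "real (N * (N - V) ^ m) \<le> real N ^ m * (real N * exp (- (q * real m)))"
    using miss N by (simp add: mult_left_mono mult.left_commute)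
  also have "\<dots> < real N ^ m" using small N by simp
  finally show ?thesis by (simp only: of_nat_less_iff of_nat_power[symmetric])
qed

lemma regular_cover_exists:
  fixes near :: "'a \<Rightarrow> 'a \<Rightarrow> bool"
  assumes fX: "finite X" and deg: "\<forall>s\<in>X. card {c\<in>X. near s c} = V"
    and V: "1 \<le> V" "V \<le> card X"
  shows "\<exists>S. S \<subseteq> X \<and> real (card S) \<le> real (card X) / real V * (ln (real (card X)) + 1)
             \<and> (\<forall>s\<in>X. \<exists>c\<in>S. near s c)"
proof -
  define N where "N = card X"
  define x where "x = real N * ln (real N) / real V"
  define m where "m = nat \<lfloor>x\<rfloor> + 1"
  have "0 \<le> x" using V by (simp add: x_def N_def)
  then have xm: "x < real m" "real m \<le> x + 1" unfolding m_def by linarith+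
  have "card X * (card X - V) ^ m < card X ^ m"
    using random_cover_condition[OF V, of m] xm(1) unfolding x_def N_def by simp
  then obtain S where S: "S \<subseteq> X" "card S \<le> m" "\<forall>s\<in>X. \<exists>c\<in>S. near s c"
    using regular_cover_upper[OF fX deg] by blast
  have "1 \<le> real N / real V" using V by (simp add: N_def)
  moreover have "real N / real V * (ln (real N) + 1) = x + real N / real V"
    unfolding x_def using V by (simp add: field_simps)
  ultimately have "real m \<le> real N / real V * (ln (real N) + 1)" using xm by linarith
  then show ?thesis using S unfolding N_def by (intro exI[of _ S]) auto
qed


section \<open>Covering numbers of slices\<close>

lemma covering_number_le:
  assumes "S \<subseteq> slices n \<Omega>" "\<forall>s\<in>slices n \<Omega>. \<exists>s'\<in>S. sdist s s' \<le> \<alpha>"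
  shows "covering_number n \<Omega> \<alpha> \<le> card S"
  unfolding covering_number_def by (rule Least_le) (use assms in blast)

lemma covering_number_attained:
  assumes "S \<subseteq> slices n \<Omega>" "\<forall>s\<in>slices n \<Omega>. \<exists>s'\<in>S. sdist s s' \<le> \<alpha>"
  shows "\<exists>S'. S' \<subseteq> slices n \<Omega> \<and> card S' = covering_number n \<Omega> \<alpha>
              \<and> (\<forall>s\<in>slices n \<Omega>. \<exists>s'\<in>S'. sdist s s' \<le> \<alpha>)"
  unfolding covering_number_def by (rule LeastI[of _ "card S"]) (use assms in blast)

lemma slice_sdist_sym: "s \<in> slices n \<Omega> \<Longrightarrow> t \<in> slices n \<Omega> \<Longrightarrow> sdist s t = sdist t s"
  unfolding slices_def sdist_def by (simp add: Int_commute)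

lemma slice_ball_regular:
  assumes "0 < slice_size n \<Omega>"
  shows "\<forall>s\<in>slices n \<Omega>. card {t\<in>slices n \<Omega>. sdist s t \<le> \<alpha>} = ball_size n (slice_size n \<Omega>) \<alpha>"
proof
  fix s assume s: "s \<in> slices n \<Omega>"
  then have "{t\<in>slices n \<Omega>. sdist s t \<le> \<alpha>} = {t\<in>slices n \<Omega>. sdist t s \<le> \<alpha>}"
    by (intro Collect_cong conj_cong refl) (simp add: slice_sdist_sym[OF s])
  then show "card {t\<in>slices n \<Omega>. sdist s t \<le> \<alpha>} = ball_size n (slice_size n \<Omega>) \<alpha>"
    using card_slice_ball[OF s assms] by simp
qed

lemma covering_number_bounds:
  fixes n :: nat and \<Omega> \<alpha> :: real
  defines "N \<equiv> n choose slice_size n \<Omega>" and "V \<equiv> ball_size n (slice_size n \<Omega>) \<alpha>"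
    and "c \<equiv> covering_number n \<Omega> \<alpha>"
  assumes k: "0 < slice_size n \<Omega>" and \<Omega>: "\<Omega> \<le> 1" and \<alpha>: "0 \<le> \<alpha>"
  shows "N \<le> c * V" and "real c \<le> real N / real V * (ln (real N) + 1)"
proof -
  let ?X = "slices n \<Omega>"
  have cX: "card ?X = N" unfolding N_def by (rule card_slices)
  have deg: "\<forall>s\<in>?X. card {t\<in>?X. sdist s t \<le> \<alpha>} = V"
    unfolding V_def by (rule slice_ball_regular[OF k])
  have V: "1 \<le> V" "V \<le> card ?X"
    using ball_size_pos[OF \<alpha>] ball_size_le_binomial[OF slice_size_le[OF \<Omega>]]
    unfolding cX V_def N_def by (auto simp: Suc_le_eq)
  from regular_cover_exists[OF finite_slices deg V]
  obtain S where S: "S \<subseteq> ?X" "real (card S) \<le> real N / real V * (ln (real N) + 1)"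
    "\<forall>s\<in>?X. \<exists>t\<in>S. sdist s t \<le> \<alpha>"
    unfolding cX by blast
  then show "real c \<le> real N / real V * (ln (real N) + 1)"
    using covering_number_le[of S n \<Omega> \<alpha>] unfolding c_def by linarith
  obtain S' where S': "S' \<subseteq> ?X" "card S' = c" "\<forall>s\<in>?X. \<exists>t\<in>S'. sdist s t \<le> \<alpha>"
    using covering_number_attained[OF S(1,3)] unfolding c_def by blast
  have sym: "sdist s t \<le> \<alpha> \<longleftrightarrow> sdist t s \<le> \<alpha>" if "s \<in> ?X" "t \<in> ?X" for s t
    using slice_sdist_sym[OF that] by simp
  have "card ?X \<le> card S' * V"
    by (rule regular_cover_lower[OF finite_slices deg sym]) (use S' in auto)
  then show "N \<le> c * V" using S'(2) cX by simp
qed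

text \<open>The logarithmic loss of the random cover is \<open>O(ln n)\<close>.\<close>
lemma ln_ln_binomial_le: "ln (ln (real (n choose k)) + 1) \<le> ln (real n + 1)"
proof (cases "k \<le> n")
  case True
  then have "0 < n choose k" by simp
  then have N: "1 \<le> real (n choose k)" by linarith
  have "real (n choose k) \<le> 2 ^ n" using binomial_le_pow2[of n k] by (simp flip: of_nat_le_iff)
  then have "ln (real (n choose k)) \<le> ln (2 ^ n)" using N True by (intro ln_mono) auto
  also have "\<dots> = real n * ln 2" by (simp add: ln_realpow)
  also have "\<dots> \<le> real n" using ln_2_less_1 by (intro mult_right_le_one_le) auto
  finally have "ln (real (n choose k)) + 1 \<le> real n + 1" by simp
  moreover have "0 \<le> ln (real (n choose k))" using N by simp
  ultimately show ?thesis by (intro ln_mono) auto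
qed (simp add: binomial_eq_0)

lemma ln_covering_number_bounds:
  fixes n :: nat and \<Omega> \<alpha> :: real
  defines "D \<equiv> ln (real (n choose slice_size n \<Omega>)) - ln (real (ball_size n (slice_size n \<Omega>) \<alpha>))"
  assumes k: "0 < slice_size n \<Omega>" and \<Omega>: "\<Omega> \<le> 1" and \<alpha>: "0 \<le> \<alpha>"
  shows "D \<le> ln (real (covering_number n \<Omega> \<alpha>))"
    and "ln (real (covering_number n \<Omega> \<alpha>)) \<le> D + ln (real n + 1)"
proof -
  define N where "N = n choose slice_size n \<Omega>"
  define V where "V = ball_size n (slice_size n \<Omega>) \<alpha>"
  define c where "c = covering_number n \<Omega> \<alpha>"
  have lower: "N \<le> c * V" and upper: "real c \<le> real N / real V * (ln (real N) + 1)"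
    using covering_number_bounds[OF k \<Omega> \<alpha>] unfolding N_def V_def c_def by auto
  have V: "0 < real V" unfolding V_def using ball_size_pos[OF \<alpha>] by simp
  have N: "0 < real N" unfolding N_def using slice_size_le[OF \<Omega>] by simp
  then have c: "0 < real c" using lower by (cases "c = 0") auto
  have "real N \<le> real c * real V" using lower by (simp flip: of_nat_mult)
  then have "ln (real N) \<le> ln (real c * real V)" using N by (rule ln_mono)
  also have "\<dots> = ln (real c) + ln (real V)" using c V by (simp add: ln_mult)
  finally have "ln (real N) \<le> ln (real c) + ln (real V)" .
  then show "D \<le> ln (real (covering_number n \<Omega> \<alpha>))" unfolding D_def N_def V_def c_def by simp
  have lnN: "0 < ln (real N) + 1" using N by (simp add: add_nonneg_pos)
  have "ln (real c) \<le> ln (real N / real V * (ln (real N) + 1))"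
    using upper c by (rule ln_mono)
  also have "\<dots> = ln (real N / real V) + ln (ln (real N) + 1)"
    using N V lnN by (intro ln_mult_pos) auto
  also have "\<dots> = ln (real N) - ln (real V) + ln (ln (real N) + 1)"
    using N V by (simp add: ln_div)
  finally show "ln (real (covering_number n \<Omega> \<alpha>)) \<le> D + ln (real n + 1)"
    using ln_ln_binomial_le[of n "slice_size n \<Omega>"] unfolding D_def N_def V_def c_def by linarith
qed


section \<open>Asymptotics\<close>

lemma slice_size_bounds:
  assumes "0 \<le> \<Omega>"
  shows "real (slice_size n \<Omega>) \<le> \<Omega> * real n" "\<Omega> * real n < real (slice_size n \<Omega>) + 1"
proof -
  have "real (slice_size n \<Omega>) = of_int \<lfloor>\<Omega> * real n\<rfloor>" using assms by (simp add: slice_size_def)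
  then show "real (slice_size n \<Omega>) \<le> \<Omega> * real n" "\<Omega> * real n < real (slice_size n \<Omega>) + 1"
    by linarith+
qed

text \<open>The normalised log-ratio \<open>(ln |slice| - ln |ball|) / n\<close>; by the sphere-covering
  bounds it determines the growth rate of the covering number.\<close>
definition covering_exponent :: "real \<Rightarrow> real \<Rightarrow> nat \<Rightarrow> real" where
  "covering_exponent \<Omega> \<alpha> n =
     (ln (real (n choose slice_size n \<Omega>)) - ln (real (ball_size n (slice_size n \<Omega>) \<alpha>))) / real n"

locale slice_regime =
  fixes \<Omega> :: real
  assumes \<Omega>_pos: "0 < \<Omega>" and \<Omega>_half: "\<Omega> \<le> 1/2"
begin

abbreviation k :: "nat \<Rightarrow> nat" where "k n \<equiv> slice_size n \<Omega>"

lemma k_le_n: "k n \<le> n"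
  using \<Omega>_half by (intro slice_size_le) simp

lemma k_dev: "\<bar>real (k n) - \<Omega> * real n\<bar> \<le> 1"
  using slice_size_bounds[of \<Omega> n] \<Omega>_pos by linarith

lemma k_rate: "(\<lambda>n. real (k n) / real n) \<longlonglongrightarrow> \<Omega>"
  by (rule tendsto_over_n_of_bounded_dev[of _ _ 1]) (use k_dev in auto)

lemma complement_rate: "(\<lambda>n. real (n - k n) / real n) \<longlonglongrightarrow> 1 - \<Omega>"
proof (rule tendsto_over_n_of_bounded_dev[of _ _ 1], intro always_eventually allI)
  fix n
  show "\<bar>real (n - k n) - (1 - \<Omega>) * real n\<bar> \<le> 1"
    using k_dev[of n] k_le_n[of n] by (simp add: of_nat_diff algebra_simps)
qed

lemma k_pos: "eventually (\<lambda>n. 0 < k n) sequentially"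
proof -
  have "eventually (\<lambda>n. \<Omega> / 2 < real (k n) / real n) sequentially"
    using order_tendstoD(1)[OF k_rate, of "\<Omega> / 2"] \<Omega>_pos by simp
  then show ?thesis
    by (rule eventually_mono) (use \<Omega>_pos in \<open>auto simp: zero_less_divide_iff intro: ccontr\<close>)
qed

text \<open>The number of points outside the centre for sets in the innermost shell of the ball.\<close>
abbreviation defect :: "real \<Rightarrow> nat \<Rightarrow> nat" where
  "defect \<alpha> n \<equiv> k n - min_overlap (k n) \<alpha>"

lemma defect_bounds:
  assumes "0 \<le> \<alpha>" "\<alpha> \<le> 1"
  shows "real (defect \<alpha> n) \<le> \<alpha> * real (k n)" "\<alpha> * real (k n) < real (defect \<alpha> n) + 1"
proof -
  have "0 \<le> (1 - \<alpha>) * real (k n)" using assms by simp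
  then have "(1 - \<alpha>) * real (k n) \<le> real (min_overlap (k n) \<alpha>)"
    "real (min_overlap (k n) \<alpha>) < (1 - \<alpha>) * real (k n) + 1"
    unfolding min_overlap_def by linarith+
  moreover have "real (defect \<alpha> n) = real (k n) - real (min_overlap (k n) \<alpha>)"
    using min_overlap_le[OF assms(1)] by (simp add: of_nat_diff)
  ultimately show "real (defect \<alpha> n) \<le> \<alpha> * real (k n)" "\<alpha> * real (k n) < real (defect \<alpha> n) + 1"
    by (simp_all add: algebra_simps)
qed

lemma defect_rate:
  assumes "0 \<le> \<alpha>" "\<alpha> \<le> 1"
  shows "(\<lambda>n. real (defect \<alpha> n) / real n) \<longlonglongrightarrow> \<alpha> * \<Omega>"
proof (rule tendsto_over_n_of_bounded_dev[of _ _ 2], intro always_eventually allI)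
  fix n
  have "\<alpha> * \<bar>real (k n) - \<Omega> * real n\<bar> \<le> 1" using k_dev[of n] assms by (simp add: mult_le_one)
  moreover have "\<alpha> * real (k n) - \<alpha> * \<Omega> * real n = \<alpha> * (real (k n) - \<Omega> * real n)"
    by (simp add: algebra_simps)
  then have "\<bar>\<alpha> * real (k n) - \<alpha> * \<Omega> * real n\<bar> = \<alpha> * \<bar>real (k n) - \<Omega> * real n\<bar>"
    using assms by (simp add: abs_mult)
  ultimately have "\<bar>\<alpha> * real (k n) - \<alpha> * \<Omega> * real n\<bar> \<le> 1" by simp
  then show "\<bar>real (defect \<alpha> n) - \<alpha> * \<Omega> * real n\<bar> \<le> 2" using defect_bounds[OF assms, of n] by linarith
qed

lemma k_le_complement:
  assumes "\<alpha> \<le> 1 - \<Omega>"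
  shows "real (k n) \<le> (1 - \<alpha>) * real n"
  using slice_size_bounds(1)[of \<Omega> n] \<Omega>_pos mult_right_mono[OF _ of_nat_0_le_iff, of \<Omega> "1 - \<alpha>" n] assms
  by linarith

lemma defect_le_complement:
  assumes "0 \<le> \<alpha>" "\<alpha> \<le> 1 - \<Omega>"
  shows "defect \<alpha> n \<le> n - k n"
proof -
  have "real (defect \<alpha> n) \<le> \<alpha> * real (k n)" using defect_bounds assms \<Omega>_pos by simp
  also have "\<dots> \<le> \<alpha> * real n" using k_le_n[of n] assms by (intro mult_left_mono) auto
  also have "\<dots> \<le> real n - real (k n)" using k_le_complement[OF assms(2), of n] by (simp add: algebra_simps)
  finally show ?thesis using k_le_n[of n] by (simp add: of_nat_diff)
qed

text \<open>The innermost shell of the ball is determined by choosing the defect inside and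
  outside the centre.\<close>
lemma innermost_shell:
  assumes "0 \<le> \<alpha>"
  shows "shell_size n (k n) (min_overlap (k n) \<alpha>) = (k n choose defect \<alpha> n) * ((n - k n) choose defect \<alpha> n)"
  unfolding shell_size_def using binomial_symmetric[OF min_overlap_le[OF assms]] by simp

lemma ln_ball_size_rate:
  assumes \<alpha>: "0 \<le> \<alpha>" "\<alpha> < 1 - \<Omega>"
  shows "(\<lambda>n. ln (real (ball_size n (k n) \<alpha>)) / real n)
           \<longlonglongrightarrow> \<Omega> * bin_entropy \<alpha> + (1 - \<Omega>) * bin_entropy (\<alpha> * \<Omega> / (1 - \<Omega>))"
    (is "_ \<longlonglongrightarrow> ?R")
proof -
  define T where "T n = shell_size n (k n) (min_overlap (k n) \<alpha>)" for n
  have \<alpha>1: "\<alpha> \<le> 1" "\<alpha> * \<Omega> \<le> \<Omega>" using \<alpha> \<Omega>_pos by (auto intro: mult_left_le_one_le)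
  then have \<alpha>\<Omega>: "\<alpha> * \<Omega> \<le> 1 - \<Omega>" using \<Omega>_half by linarith
  have inner: "(\<lambda>n. ln (real (k n choose defect \<alpha> n)) / real n) \<longlonglongrightarrow> \<Omega> * bin_entropy (\<alpha> * \<Omega> / \<Omega>)"
    by (rule ln_binomial_rate[OF k_rate defect_rate[OF \<alpha>(1) \<alpha>1(1)]])
       (use \<Omega>_pos \<alpha> \<alpha>1 k_le_n in auto)
  have outer: "(\<lambda>n. ln (real ((n - k n) choose defect \<alpha> n)) / real n)
      \<longlonglongrightarrow> (1 - \<Omega>) * bin_entropy (\<alpha> * \<Omega> / (1 - \<Omega>))"
    by (rule ln_binomial_rate[OF complement_rate defect_rate[OF \<alpha>(1) \<alpha>1(1)]])
       (use \<Omega>_pos \<Omega>_half \<alpha> \<alpha>\<Omega> defect_le_complement[of \<alpha>] in auto)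
  have ln_T: "ln (real (T n)) = ln (real (k n choose defect \<alpha> n)) + ln (real ((n - k n) choose defect \<alpha> n))"
    for n
    unfolding T_def innermost_shell[OF \<alpha>(1)] of_nat_mult
    using defect_le_complement[of \<alpha> n] \<alpha> by (intro ln_mult_pos) auto
  have T_rate: "(\<lambda>n. ln (real (T n)) / real n) \<longlonglongrightarrow> ?R"
    using tendsto_add[OF inner outer] \<Omega>_pos unfolding ln_T by (simp add: add_divide_distrib)
  then have T_rate': "(\<lambda>n. ln (real (T n)) / real n + ln (real n + 1) / real n) \<longlonglongrightarrow> ?R"
    using tendsto_add[OF _ ln_Suc_over_n] by force
  have "ln (real (T n)) / real n \<le> ln (real (ball_size n (k n) \<alpha>)) / real n
      \<and> ln (real (ball_size n (k n) \<alpha>)) / real n \<le> ln (real (T n)) / real n + ln (real n + 1) / real n"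
    for n
  proof -
    have "0 < T n"
      unfolding T_def innermost_shell[OF \<alpha>(1)] using defect_le_complement[of \<alpha> n] \<alpha>
      by (simp add: zero_less_binomial_iff)
    moreover have "real (k n) \<le> (1 - \<alpha>) * real n" using k_le_complement \<alpha>(2) by simp
    ultimately show ?thesis
      using ln_ball_size_bounds[of "k n" \<alpha> n, folded T_def] \<alpha>(1)
      by (simp add: divide_right_mono flip: add_divide_distrib)
  qed
  then show ?thesis
    by (intro tendsto_sandwich[OF always_eventually always_eventually T_rate T_rate']) auto
qed

lemma exponent_rate_below:
  assumes \<alpha>: "0 \<le> \<alpha>" "\<alpha> < 1 - \<Omega>"
  shows "covering_exponent \<Omega> \<alpha> \<longlonglongrightarrow> rate \<Omega> \<alpha>"
proof -
  have "(\<lambda>n. real n / real n) \<longlonglongrightarrow> 1" by real_asymp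
  then have slice: "(\<lambda>n. ln (real (n choose k n)) / real n) \<longlonglongrightarrow> 1 * bin_entropy (\<Omega> / 1)"
    by (rule ln_binomial_rate[OF _ k_rate]) (use \<Omega>_pos \<Omega>_half k_le_n in auto)
  have "rate \<Omega> \<alpha> = bin_entropy \<Omega>
      - (\<Omega> * bin_entropy \<alpha> + (1 - \<Omega>) * bin_entropy (\<alpha> * \<Omega> / (1 - \<Omega>)))"
    using \<alpha> unfolding rate_def by (simp add: mult.commute)
  then show ?thesis
    using tendsto_diff[OF slice ln_ball_size_rate[OF \<alpha>]]
    unfolding covering_exponent_def by (simp add: diff_divide_distrib)
qed

text \<open>A ball is never larger than the slice.\<close>
lemma exponent_nonneg:
  assumes "0 \<le> \<alpha>"
  shows "0 \<le> covering_exponent \<Omega> \<alpha> n"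
proof -
  have "ln (real (ball_size n (k n) \<alpha>)) \<le> ln (real (n choose k n))"
    using ball_size_pos[OF assms, of n "k n"] ball_size_le_binomial[OF k_le_n[of n], of \<alpha>]
    by (intro ln_mono) auto
  then show ?thesis unfolding covering_exponent_def by simp
qed

text \<open>Larger balls can only decrease the exponent.\<close>
lemma exponent_antimono:
  assumes "0 \<le> \<alpha>'" "\<alpha>' \<le> \<alpha>"
  shows "covering_exponent \<Omega> \<alpha> n \<le> covering_exponent \<Omega> \<alpha>' n"
  unfolding covering_exponent_def
  using ball_size_pos[OF assms(1), of n "k n"] ball_size_mono[OF assms(2), of n "k n"]
  by (intro divide_right_mono) auto

lemma rate_near_threshold:
  assumes "0 < e"
  shows "\<exists>\<alpha>. 0 \<le> \<alpha> \<and> \<alpha> < 1 - \<Omega> \<and> rate \<Omega> \<alpha> < e"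
proof -
  let ?F = "at_left (1 - \<Omega>)"
  define g where "g \<alpha> = bin_entropy \<Omega> - \<Omega> * bin_entropy \<alpha> - (1 - \<Omega>) * bin_entropy (\<Omega> * \<alpha> / (1 - \<Omega>))"
    for \<alpha>
  have range: "eventually (\<lambda>\<alpha>. \<alpha> \<in> {0<..<1 - \<Omega>}) ?F"
    using \<Omega>_half by (intro eventually_at_left_real) simp
  have lim: "((\<lambda>\<alpha>. \<alpha>) \<longlongrightarrow> 1 - \<Omega>) ?F" "((\<lambda>\<alpha>. \<Omega> * \<alpha> / (1 - \<Omega>)) \<longlongrightarrow> \<Omega>) ?F"
    using \<Omega>_half by (auto intro!: tendsto_eq_intros)
  have "eventually (\<lambda>\<alpha>. \<Omega> * \<alpha> / (1 - \<Omega>) \<in> {0..1}) ?F"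
    using range
  proof eventually_elim
    case (elim \<alpha>)
    then have "\<Omega> * \<alpha> \<le> 1 - \<Omega>" using \<Omega>_pos \<Omega>_half by (auto intro: order.trans[OF mult_left_le_one_le])
    then show ?case using elim \<Omega>_pos \<Omega>_half by auto
  qed
  moreover have "eventually (\<lambda>\<alpha>. \<alpha> \<in> {0..1}) ?F" using range by eventually_elim (use \<Omega>_pos in auto)
  ultimately have "(g \<longlongrightarrow> bin_entropy \<Omega> - \<Omega> * bin_entropy (1 - \<Omega>) - (1 - \<Omega>) * bin_entropy \<Omega>) ?F"
    unfolding g_def using \<Omega>_pos \<Omega>_half
    by (intro tendsto_diff tendsto_mult tendsto_const tendsto_bin_entropy lim) auto
  then have "(g \<longlongrightarrow> 0) ?F" by (simp add: bin_entropy_sym algebra_simps)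
  then have "eventually (\<lambda>\<alpha>. g \<alpha> < e \<and> \<alpha> \<in> {0<..<1 - \<Omega>}) ?F"
    using order_tendstoD(2)[of g 0 ?F e] assms range eventually_conj by blast
  then obtain \<alpha> where "g \<alpha> < e" "0 < \<alpha>" "\<alpha> < 1 - \<Omega>"
    using eventually_happens'[OF trivial_limit_at_left_real] by auto
  moreover have "rate \<Omega> \<alpha> = g \<alpha>" using \<open>\<alpha> < 1 - \<Omega>\<close> unfolding rate_def g_def by simp
  ultimately show ?thesis by (intro exI[of _ \<alpha>]) auto
qed

text \<open>From the threshold on, the exponent is squeezed between \<open>0\<close> and the exponents
  for radii just below \<open>1 - \<Omega>\<close>, whose limits are arbitrarily small.\<close>
lemma exponent_rate:
  assumes \<alpha>: "0 \<le> \<alpha>"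
  shows "covering_exponent \<Omega> \<alpha> \<longlonglongrightarrow> rate \<Omega> \<alpha>"
proof (cases "\<alpha> < 1 - \<Omega>")
  case True
  then show ?thesis using exponent_rate_below[OF \<alpha>] by blast
next
  case False
  then have "rate \<Omega> \<alpha> = 0" unfolding rate_def by simp
  moreover have "covering_exponent \<Omega> \<alpha> \<longlonglongrightarrow> 0"
  proof (rule order_tendstoI)
    fix y :: real assume "y < 0"
    then show "eventually (\<lambda>n. y < covering_exponent \<Omega> \<alpha> n) sequentially"
      using exponent_nonneg[OF \<alpha>] by (intro always_eventually) (auto intro: less_le_trans)
  next
    fix y :: real assume "0 < y"
    then obtain \<alpha>' where \<alpha>': "0 \<le> \<alpha>'" "\<alpha>' < 1 - \<Omega>" "rate \<Omega> \<alpha>' < y"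
      using rate_near_threshold by blast
    then have "eventually (\<lambda>n. covering_exponent \<Omega> \<alpha>' n < y) sequentially"
      using order_tendstoD(2)[OF exponent_rate_below[OF \<alpha>'(1,2)]] by blast
    then show "eventually (\<lambda>n. covering_exponent \<Omega> \<alpha> n < y) sequentially"
      by (rule eventually_mono)
         (use exponent_antimono[OF \<alpha>'(1), of \<alpha>] \<alpha>'(2) False in \<open>auto intro: le_less_trans\<close>)
  qed
  ultimately show ?thesis by simp
qed

end


theorem lemma1:
  fixes \<Omega> \<alpha> :: real
  assumes "0 < \<Omega>" and "\<Omega> \<le> 1/2" and "0 \<le> \<alpha>" and "\<alpha> \<le> 1"
  shows "(\<lambda>n. ln (real (covering_number n \<Omega> \<alpha>)) / real n) \<longlonglongrightarrow> rate \<Omega> \<alpha>"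
proof -
  interpret slice_regime \<Omega> using assms(1,2) by unfold_locales
  have lower: "covering_exponent \<Omega> \<alpha> \<longlonglongrightarrow> rate \<Omega> \<alpha>" by (rule exponent_rate[OF assms(3)])
  have upper: "(\<lambda>n. covering_exponent \<Omega> \<alpha> n + ln (real n + 1) / real n) \<longlonglongrightarrow> rate \<Omega> \<alpha>"
    using tendsto_add[OF lower ln_Suc_over_n] by simp
  have "eventually (\<lambda>n. covering_exponent \<Omega> \<alpha> n \<le> ln (real (covering_number n \<Omega> \<alpha>)) / real n
      \<and> ln (real (covering_number n \<Omega> \<alpha>)) / real n \<le> covering_exponent \<Omega> \<alpha> n + ln (real n + 1) / real n)
      sequentially" (is "eventually (\<lambda>n. ?bounds n) _")
    using k_pos
  proof (rule eventually_mono)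
    fix n assume "0 < k n"
    from ln_covering_number_bounds[OF this _ assms(3)] assms(2)
    show "?bounds n" unfolding covering_exponent_def
      by (simp add: divide_right_mono flip: add_divide_distrib)
  qed
  then show ?thesis
    by (intro tendsto_sandwich[OF _ _ lower upper]) (auto elim: eventually_mono)
qed

end
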